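(* Let $k$ be a number field of degree $n$ with $r_1\ge1$ real embeddings, embedded in $V=\mathbb R^{r_1}\times\mathbb C^{r_2}$. Let $v_1,\dots,v_\ell\in k$ with $\ell<n$, and let $e_1\in V$ be defined by $e_1^{(1)}=1$ and $e_1^{(j)}=0$ for $2\le j\le r_1+r_2$. Then $e_1$ does not lie in the real span $\mathbb Rv_1+\cdots+\mathbb Rv_\ell$.
   Context: $k$ has real embeddings $\tau_1,\dots,\tau_{r_1}$ and complex embeddings $\tau_{r_1+1},\dots,\tau_{r_1+r_2}$ (one from each conjugate pair), $n=r_1+2r_2$; $\gamma\in k$ is identified with $(\tau_i(\gamma))_i=(\gamma^{(i)})_i\in\mathbb R^{r_1}\times\mathbb C^{r_2}$, the first coordinate corresponding to the real embedding $\tau_1$. *)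

theory Defs
  imports Complex_Main
begin

definition subfield_C :: "complex set \<Rightarrow> bool" where
  "subfield_C K \<longleftrightarrow> 0 \<in> K \<and> 1 \<in> K \<and>
     (\<forall>x\<in>K. \<forall>y\<in>K. x + y \<in> K \<and> x * y \<in> K) \<and>
     (\<forall>x\<in>K. - x \<in> K) \<and> (\<forall>x\<in>K. x \<noteq> 0 \<longrightarrow> inverse x \<in> K)"

definition rat_basis :: "complex set \<Rightarrow> complex set \<Rightarrow> bool" where
  "rat_basis K B \<longleftrightarrow> finite B \<and> B \<subseteq> K \<and>
     (\<forall>c. (\<forall>b\<in>B. c b \<in> \<rat>) \<and> (\<Sum>b\<in>B. c b * b) = 0 \<longrightarrow> (\<forall>b\<in>B. c b = 0)) \<and>
     (\<forall>x\<in>K. \<exists>c. (\<forall>b\<in>B. c b \<in> \<rat>) \<and> x = (\<Sum>b\<in>B. c b * b))"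

definition number_field :: "complex set \<Rightarrow> nat \<Rightarrow> bool" where
  "number_field K n \<longleftrightarrow> subfield_C K \<and> (\<exists>B. rat_basis K B \<and> card B = n)"

text \<open>Embeddings K \<rightarrow> C (field homomorphisms), made extensional (value 0 outside K)
  so that distinct embeddings are distinct functions.\<close>

definition embeddings :: "complex set \<Rightarrow> (complex \<Rightarrow> complex) set" where
  "embeddings K = {\<sigma>. \<sigma> 1 = 1 \<and>
     (\<forall>x\<in>K. \<forall>y\<in>K. \<sigma> (x + y) = \<sigma> x + \<sigma> y \<and> \<sigma> (x * y) = \<sigma> x * \<sigma> y) \<and>
     (\<forall>x. x \<notin> K \<longrightarrow> \<sigma> x = 0)}"

definition real_embeddings :: "complex set \<Rightarrow> (complex \<Rightarrow> complex) set" where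
  "real_embeddings K = {\<sigma> \<in> embeddings K. \<forall>x\<in>K. \<sigma> x \<in> \<real>}"

definition complex_embeddings :: "complex set \<Rightarrow> (complex \<Rightarrow> complex) set" where
  "complex_embeddings K = embeddings K - real_embeddings K"

definition standard_embeddings ::
  "complex set \<Rightarrow> nat \<Rightarrow> nat \<Rightarrow> (nat \<Rightarrow> complex \<Rightarrow> complex) \<Rightarrow> bool" where
  "standard_embeddings K r1 r2 \<tau> \<longleftrightarrow>
     bij_betw \<tau> {1..r1} (real_embeddings K) \<and>
     (\<forall>i\<in>{r1+1..r1+r2}. \<tau> i \<in> complex_embeddings K) \<and>
     (\<forall>\<sigma>\<in>complex_embeddings K. \<exists>!i. i \<in> {r1+1..r1+r2} \<and> (\<sigma> = \<tau> i \<or> \<sigma> = cnj \<circ> \<tau> i))"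

text \<open>The image of gamma in V = R^r1 x C^r2, as the coordinate function j \<mapsto> tau j gamma
  on indices j = 1..r1+r2 (coordinates j \<le> r1 are real).\<close>

definition embV :: "(nat \<Rightarrow> complex \<Rightarrow> complex) \<Rightarrow> complex \<Rightarrow> nat \<Rightarrow> complex" where
  "embV \<tau> \<gamma> = (\<lambda>j. \<tau> j \<gamma>)"

definition real_span_V :: "nat \<Rightarrow> nat \<Rightarrow> (nat \<Rightarrow> nat \<Rightarrow> complex) \<Rightarrow> (nat \<Rightarrow> complex) set" where
  "real_span_V d l w = {x. \<exists>c :: nat \<Rightarrow> real. \<forall>j\<in>{1..d}. x j = (\<Sum>i=1..l. of_real (c i) * w i j)}"

definition e1 :: "nat \<Rightarrow> complex" where
  "e1 = (\<lambda>j. if j = 1 then 1 else 0)"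

end

theory Submission
  imports Defs "Jordan_Normal_Form.Determinant"
    "HOL-Computational_Algebra.Fundamental_Theorem_Algebra"
begin

text \<open>Fix a \<open>\<rat>\<close>-basis \<open>b\<close> of \<open>K\<close>; complex coordinate vectors then represent
  \<open>K \<otimes>\<^sub>\<rat> \<complex>\<close>. If \<open>e\<^sub>1 = \<Sum> c\<^sub>i \<tau>(v\<^sub>i)\<close> with real \<open>c\<^sub>i\<close>, the vector \<open>y\<close> of \<open>\<Sum> c\<^sub>i v\<^sub>i\<close> satisfies
  \<open>\<sigma>(y) = [\<sigma> = \<tau>\<^sub>1]\<close> for every embedding \<open>\<sigma>\<close>: the embeddings missing from the list are
  complex conjugates of listed ones, and the \<open>c\<^sub>i\<close> are real.
  The embeddings separate the points of \<open>K \<otimes> \<complex>\<close>: a nonzero common kernel would be invariant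
  under the commuting multiplication operators, hence contain a common eigenvector; its
  eigenvalues form an embedding \<open>\<sigma>\<^sub>0\<close>, and nondegeneracy of the trace form gives \<open>\<sigma>\<^sub>0(y) \<noteq> 0\<close>.
  Hence \<open>a y = \<tau>\<^sub>1(a) y\<close> for all \<open>a \<in> K\<close>. As \<open>\<ell> < n\<close>, a nonzero rational functional \<open>f\<close> vanishes
  on all \<open>v\<^sub>i\<close>, hence on \<open>y\<close>, so \<open>f(a y) = \<tau>\<^sub>1(a) f(y) = 0\<close> for all \<open>a\<close>; this contradicts the
  nondegeneracy of \<open>(a, a') \<mapsto> f(a a')\<close> on \<open>K\<close>, because \<open>y \<noteq> 0\<close>.\<close>

section \<open>Linear algebra on coordinate vectors\<close>

definition matvec :: "nat \<Rightarrow> (nat \<Rightarrow> nat \<Rightarrow> 'a::comm_semiring_0) \<Rightarrow> (nat \<Rightarrow> 'a) \<Rightarrow> nat \<Rightarrow> 'a"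
  where "matvec n A x = (\<lambda>i. \<Sum>j<n. A i j * x j)"

lemma matvec_cong: "(\<And>j. j < n \<Longrightarrow> x j = y j) \<Longrightarrow> matvec n A x = matvec n A y"
  unfolding matvec_def by simp

lemma matvec_lincomb:
  "matvec n A (\<lambda>k. x k + c * y k) = (\<lambda>i. matvec n A x i + c * matvec n A y i)"
  unfolding matvec_def by (simp add: distrib_left sum.distrib sum_distrib_left ac_simps)

lemma funpow_matvec_lincomb:
  "(matvec n A ^^ m) (\<lambda>k. x k + c * y k) =
    (\<lambda>i. (matvec n A ^^ m) x i + c * (matvec n A ^^ m) y i)"
  by (induction m) (simp_all add: matvec_lincomb)

lemma matvec_scale: "matvec n A (\<lambda>k. c * x k) = (\<lambda>i. c * matvec n A x i)"
  unfolding matvec_def by (simp add: sum_distrib_left ac_simps)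

lemma mat_mult_vec_index:
  "i < n \<Longrightarrow> (mat n n (\<lambda>(i, j). A i j) *\<^sub>v vec n x) $ i = matvec n A x i"
  by (simp add: matvec_def mult_mat_vec_def scalar_prod_def atLeast0LessThan)

lemma det_eq_0_iff_nontrivial_kernel:
  fixes A :: "nat \<Rightarrow> nat \<Rightarrow> 'a::field"
  shows "det (mat n n (\<lambda>(i, j). A i j)) = 0 \<longleftrightarrow>
    (\<exists>x. (\<exists>j<n. x j \<noteq> 0) \<and> (\<forall>i<n. matvec n A x i = 0))"
proof -
  let ?M = "mat n n (\<lambda>(i, j). A i j)"
  have "(\<exists>v. v \<in> carrier_vec n \<and> v \<noteq> 0\<^sub>v n \<and> ?M *\<^sub>v v = 0\<^sub>v n) \<longleftrightarrow>
    (\<exists>x. (\<exists>j<n. x j \<noteq> 0) \<and> (\<forall>i<n. matvec n A x i = 0))"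
  proof
    assume "\<exists>v. v \<in> carrier_vec n \<and> v \<noteq> 0\<^sub>v n \<and> ?M *\<^sub>v v = 0\<^sub>v n"
    then obtain v where v: "v \<in> carrier_vec n" "v \<noteq> 0\<^sub>v n" "?M *\<^sub>v v = 0\<^sub>v n" by blast
    have vec_v: "vec n (($) v) = v" using v(1) by auto
    have "matvec n A (($) v) i = 0" if "i < n" for i
      using v(3) that by (metis mat_mult_vec_index vec_v index_zero_vec(1))
    moreover have "\<exists>j<n. v $ j \<noteq> 0" using v(1,2) by (auto simp: vec_eq_iff)
    ultimately show "\<exists>x. (\<exists>j<n. x j \<noteq> 0) \<and> (\<forall>i<n. matvec n A x i = 0)" by blast
  next
    assume "\<exists>x. (\<exists>j<n. x j \<noteq> 0) \<and> (\<forall>i<n. matvec n A x i = 0)"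
    then obtain x where x: "\<exists>j<n. x j \<noteq> 0" "\<forall>i<n. matvec n A x i = 0" by blast
    have "?M *\<^sub>v vec n x = 0\<^sub>v n"
    proof (rule eq_vecI)
      fix i assume "i < dim_vec (0\<^sub>v n :: 'a vec)"
      then show "(?M *\<^sub>v vec n x) $ i = 0\<^sub>v n $ i"
        by (subst mat_mult_vec_index) (use x(2) in auto)
    qed simp
    moreover have "vec n x \<noteq> 0\<^sub>v n" using x(1) by (auto simp: vec_eq_iff)
    ultimately show "\<exists>v. v \<in> carrier_vec n \<and> v \<noteq> 0\<^sub>v n \<and> ?M *\<^sub>v v = 0\<^sub>v n"
      using vec_carrier by blast
  qed
  then show ?thesis
    using det_0_iff_vec_prod_zero_field[of "mat n n (\<lambda>(i, j). A i j)" n] by simp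
qed

lemma underdetermined_system_nontrivial_solution:
  fixes A :: "nat \<Rightarrow> nat \<Rightarrow> 'a::field"
  assumes "m < N"
  obtains x where "\<exists>j<N. x j \<noteq> 0" and "\<forall>i<m. matvec N A x i = 0"
proof -
  let ?A = "\<lambda>i j. if i < m then A i j else 0"
  have "mat N N (\<lambda>(i, j). ?A i j) =
      mat\<^sub>r N N (\<lambda>i. if i = N - 1 then 0\<^sub>v N else vec N (?A i))"
    using assms by (auto intro!: eq_matI)
  then have "det (mat N N (\<lambda>(i, j). ?A i j)) = 0"
    using assms by (simp add: det_row_0)
  then obtain x where "\<exists>j<N. x j \<noteq> 0" "\<forall>i<N. matvec N ?A x i = 0"
    by (auto simp: det_eq_0_iff_nontrivial_kernel)
  moreover have "matvec N A x i = matvec N ?A x i" if "i < m" for i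
    using that by (simp add: matvec_def)
  ultimately show ?thesis
    using assms by (intro that[of x]) auto
qed

lemma finite_underdetermined_system_nontrivial_solution:
  fixes A :: "'i \<Rightarrow> nat \<Rightarrow> 'a::field"
  assumes "finite I" "card I < N"
  obtains x where "\<exists>j<N. x j \<noteq> 0" and "\<forall>i\<in>I. (\<Sum>j<N. A i j * x j) = 0"
proof -
  obtain h where h: "bij_betw h {..<card I} I"
    using ex_bij_betw_nat_finite[OF assms(1)] unfolding atLeast0LessThan by blast
  obtain x where x: "\<exists>j<N. x j \<noteq> 0" "\<forall>i<card I. matvec N (\<lambda>i. A (h i)) x i = 0"
    using underdetermined_system_nontrivial_solution[OF assms(2)] by blast
  have "(\<Sum>j<N. A i j * x j) = 0" if "i \<in> I" for i
  proof -
    have "i \<in> h ` {..<card I}" using h that by (simp add: bij_betw_def)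
    then obtain i' where "i' < card I" "i = h i'" by blast
    then show ?thesis using x(2) by (simp add: matvec_def)
  qed
  then show ?thesis using that x(1) by blast
qed

lemma matvec_of_rat_kernel_trivial:
  fixes A :: "nat \<Rightarrow> nat \<Rightarrow> rat" and x :: "nat \<Rightarrow> 'a::field_char_0"
  assumes "\<And>u. \<forall>i<n. matvec n A u i = 0 \<Longrightarrow> \<forall>j<n. u j = 0"
    and "\<forall>i<n. matvec n (\<lambda>i j. of_rat (A i j)) x i = 0"
  shows "\<forall>j<n. x j = 0"
proof -
  have "det (mat n n (\<lambda>(i, j). A i j)) \<noteq> 0"
    using assms(1) by (auto simp: det_eq_0_iff_nontrivial_kernel)
  moreover have "map_mat of_rat (mat n n (\<lambda>(i, j). A i j)) =
      (mat n n (\<lambda>(i, j). of_rat (A i j)) :: 'a mat)"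
    by auto
  ultimately have "(det (mat n n (\<lambda>(i, j). of_rat (A i j))) :: 'a) \<noteq> 0"
    by (metis of_rat_hom.hom_det of_rat_eq_0_iff)
  then show ?thesis
    using assms(2) by (auto simp: det_eq_0_iff_nontrivial_kernel)
qed

section \<open>Common eigenvectors of commuting matrices\<close>

definition vec_subspace :: "(nat \<Rightarrow> 'a::semiring_0) set \<Rightarrow> bool"
  where "vec_subspace S \<longleftrightarrow> (\<forall>x\<in>S. \<forall>y\<in>S. \<forall>c. (\<lambda>k. x k + c * y k) \<in> S)"

definition poly_matvec ::
    "nat \<Rightarrow> (nat \<Rightarrow> nat \<Rightarrow> 'a::comm_ring_1) \<Rightarrow> 'a poly \<Rightarrow> (nat \<Rightarrow> 'a) \<Rightarrow> nat \<Rightarrow> 'a"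
  where "poly_matvec n A p x = (\<lambda>k. \<Sum>m\<le>degree p. coeff p m * (matvec n A ^^ m) x k)"

lemma poly_matvec_eq_sum:
  assumes "degree p < N"
  shows "poly_matvec n A p x k = (\<Sum>m<N. coeff p m * (matvec n A ^^ m) x k)"
  unfolding poly_matvec_def using assms
  by (intro sum.mono_neutral_left) (auto simp: coeff_eq_0)

lemma coeff_linear_factor_mult:
  fixes q :: "'a::comm_ring_1 poly"
  shows "coeff ([:-a, 1:] * q) m = coeff (pCons 0 q) m - a * coeff q m"
  by (cases m) (simp_all add: mult_pCons_left)

lemma poly_matvec_linear_factor:
  "poly_matvec n A ([:-a, 1:] * q) x = poly_matvec n A q (\<lambda>k. matvec n A x k + (-a) * x k)"
proof
  fix k
  let ?T = "matvec n A" and ?N = "Suc (degree q)"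
  have "degree ([:-a, 1:] * q) \<le> 1 + degree q"
    using degree_mult_le[of "[:-a, 1:]" q] by simp
  then have "poly_matvec n A ([:-a, 1:] * q) x k =
      (\<Sum>m<Suc ?N. coeff ([:-a, 1:] * q) m * (?T ^^ m) x k)"
    by (intro poly_matvec_eq_sum) simp
  also have "\<dots> = (\<Sum>m<Suc ?N. coeff (pCons 0 q) m * (?T ^^ m) x k)
      - a * (\<Sum>m<Suc ?N. coeff q m * (?T ^^ m) x k)"
    by (simp add: coeff_linear_factor_mult left_diff_distrib sum_subtractf sum_distrib_left
        mult.assoc del: sum.lessThan_Suc)
  also have "\<dots> = (\<Sum>m<?N. coeff q m * (?T ^^ Suc m) x k)
      - a * (\<Sum>m<?N. coeff q m * (?T ^^ m) x k)"
  proof -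
    have "(\<Sum>m<Suc ?N. coeff (pCons 0 q) m * (?T ^^ m) x k) =
        (\<Sum>m<?N. coeff q m * (?T ^^ Suc m) x k)"
      by (simp only: sum.lessThan_Suc_shift) simp
    moreover have "(\<Sum>m<Suc ?N. coeff q m * (?T ^^ m) x k) =
        (\<Sum>m<?N. coeff q m * (?T ^^ m) x k)"
      by (simp add: coeff_eq_0 del: funpow.simps)
    ultimately show ?thesis by (simp only:)
  qed
  also have "\<dots> = (\<Sum>m<?N. coeff q m * (?T ^^ m) (\<lambda>k. ?T x k + (-a) * x k) k)"
  proof -
    have "(?T ^^ m) (\<lambda>k. ?T x k + (-a) * x k) k = (?T ^^ Suc m) x k - a * (?T ^^ m) x k" for m
      unfolding funpow_matvec_lincomb funpow_Suc_right comp_def by simp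
    then show ?thesis
      by (simp add: right_diff_distrib sum_subtractf sum_distrib_left ac_simps
          del: funpow.simps sum.lessThan_Suc)
  qed
  also have "\<dots> = poly_matvec n A q (\<lambda>k. ?T x k + (-a) * x k) k"
    by (rule poly_matvec_eq_sum[symmetric]) simp
  finally show "poly_matvec n A ([:-a, 1:] * q) x k =
      poly_matvec n A q (\<lambda>k. ?T x k + (-a) * x k) k" .
qed

lemma eigenvector_of_annihilating_poly:
  fixes A :: "nat \<Rightarrow> nat \<Rightarrow> complex"
  assumes S: "vec_subspace S" and inv: "\<forall>x\<in>S. matvec n A x \<in> S"
    and "x \<in> S" "\<exists>k<n. x k \<noteq> 0" "p \<noteq> 0" "\<forall>k<n. poly_matvec n A p x k = 0"
  shows "\<exists>y\<in>S. (\<exists>k<n. y k \<noteq> 0) \<and> (\<exists>\<mu>. \<forall>k<n. matvec n A y k = \<mu> * y k)"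
  using assms(3-6)
proof (induction "degree p" arbitrary: p x rule: less_induct)
  case less
  show ?case
  proof (cases "degree p = 0")
    case True
    then obtain c where p: "p = [:c:]" by (metis degree_eq_zeroE)
    obtain k where "k < n" "x k \<noteq> 0" using less.prems(2) by blast
    moreover have "poly_matvec n A p x k = c * x k" by (simp add: poly_matvec_def p)
    ultimately show ?thesis using less.prems(3,4) p by auto
  next
    case False
    then obtain a where "poly p a = 0"
      by (metis fundamental_theorem_of_algebra constant_degree)
    then obtain q where pq: "p = [:-a, 1:] * q" by (metis dvdE poly_eq_0_iff_dvd)
    with less.prems(3) have "q \<noteq> 0" by auto
    then have "degree p = 1 + degree q" unfolding pq by (subst degree_mult_eq) auto
    define x' where "x' = (\<lambda>k. matvec n A x k + (-a) * x k)"
    have "x' \<in> S" using S inv less.prems(1) unfolding vec_subspace_def x'_def by blast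
    moreover have "\<forall>k<n. poly_matvec n A q x' k = 0"
      using less.prems(4) unfolding pq poly_matvec_linear_factor x'_def .
    ultimately show ?thesis
      using less.hyps[of q x'] \<open>q \<noteq> 0\<close> \<open>degree p = 1 + degree q\<close> less.prems(1,2)
      by (cases "\<exists>k<n. x' k \<noteq> 0") (auto simp: x'_def)
  qed
qed

lemma eigenvector_in_invariant_subspace:
  fixes A :: "nat \<Rightarrow> nat \<Rightarrow> complex"
  assumes "vec_subspace S" "\<forall>x\<in>S. matvec n A x \<in> S" "x \<in> S" "\<exists>k<n. x k \<noteq> 0"
  shows "\<exists>y\<in>S. (\<exists>k<n. y k \<noteq> 0) \<and> (\<exists>\<mu>. \<forall>k<n. matvec n A y k = \<mu> * y k)"
proof -
  \<comment> \<open>the \<open>n + 1\<close> vectors \<open>A\<^sup>m x\<close>, \<open>m \<le> n\<close>, are linearly dependent\<close>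
  obtain c where c: "\<exists>m<Suc n. c m \<noteq> 0"
    "\<forall>k<n. matvec (Suc n) (\<lambda>k m. (matvec n A ^^ m) x k) c k = 0"
    using underdetermined_system_nontrivial_solution[of n "Suc n"] by blast
  define p where "p = (\<Sum>m<Suc n. monom (c m) m)"
  have coeff_p: "coeff p m = (if m < Suc n then c m else 0)" for m
    by (simp add: p_def coeff_sum coeff_monom)
  have "p \<noteq> 0" using c(1) coeff_p by (metis coeff_0)
  moreover have "degree p < Suc n"
    using coeff_p by (metis degree_le le_imp_less_Suc not_less_eq)
  then have "\<forall>k<n. poly_matvec n A p x k = 0"
    using c(2) by (simp add: poly_matvec_eq_sum coeff_p matvec_def ac_simps)
  ultimately show ?thesis
    by (rule eigenvector_of_annihilating_poly[OF assms])
qed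

lemma common_eigenvector:
  fixes \<A> :: "(nat \<Rightarrow> nat \<Rightarrow> complex) set"
  assumes "finite \<A>" and "vec_subspace S" and "\<forall>A\<in>\<A>. \<forall>x\<in>S. matvec n A x \<in> S"
    and "\<forall>A\<in>\<A>. \<forall>B\<in>\<A>. \<forall>x. matvec n A (matvec n B x) = matvec n B (matvec n A x)"
    and "x \<in> S" and "\<exists>k<n. x k \<noteq> 0"
  shows "\<exists>y\<in>S. (\<exists>k<n. y k \<noteq> 0) \<and> (\<forall>A\<in>\<A>. \<exists>\<mu>. \<forall>k<n. matvec n A y k = \<mu> * y k)"
  using assms
proof (induction \<A> arbitrary: S x rule: finite_induct)
  case empty
  then show ?case by blast
next
  case (insert A \<A>)
  obtain y \<mu> where y: "y \<in> S" "\<exists>k<n. y k \<noteq> 0" "\<forall>k<n. matvec n A y k = \<mu> * y k"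
    using eigenvector_in_invariant_subspace[of S n A x] insert.prems by blast
  define E where "E = {z \<in> S. \<forall>k<n. matvec n A z k = \<mu> * z k}"
  have "vec_subspace E"
    using insert.prems(1) by (auto simp: vec_subspace_def E_def matvec_lincomb distrib_left)
  moreover have "matvec n B z \<in> E" if "B \<in> \<A>" "z \<in> E" for B z
  proof -
    have "matvec n A (matvec n B z) = matvec n B (matvec n A z)"
      using insert.prems(3) that(1) by blast
    also have "\<dots> = matvec n B (\<lambda>k. \<mu> * z k)"
      using that(2) by (intro matvec_cong) (simp add: E_def)
    finally show ?thesis
      using insert.prems(2) that by (auto simp: E_def matvec_scale)
  qed
  moreover have "y \<in> E" using y by (simp add: E_def)
  ultimately obtain w where "w \<in> E" "\<exists>k<n. w k \<noteq> 0"
    "\<forall>B\<in>\<A>. \<exists>\<mu>. \<forall>k<n. matvec n B w k = \<mu> * w k"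
    using insert.IH[of E y] insert.prems(3) y(2) by blast
  then show ?case by (auto simp: E_def)
qed

section \<open>Coordinates with respect to a rational basis\<close>

locale number_field_basis =
  fixes K :: "complex set" and n :: nat and b :: "nat \<Rightarrow> complex"
  assumes subfield: "subfield_C K"
    and basis_in_field: "i < n \<Longrightarrow> b i \<in> K"
    and basis_independent: "(\<Sum>j<n. of_rat (q j) * b j) = 0 \<Longrightarrow> i < n \<Longrightarrow> q i = 0"
    and basis_spans: "x \<in> K \<Longrightarrow> \<exists>q. x = (\<Sum>j<n. of_rat (q j) * b j)"
begin

lemma field_zero: "0 \<in> K" and field_one: "1 \<in> K"
  and field_add: "x \<in> K \<Longrightarrow> y \<in> K \<Longrightarrow> x + y \<in> K"
  and field_mult: "x \<in> K \<Longrightarrow> y \<in> K \<Longrightarrow> x * y \<in> K"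
  and field_uminus: "x \<in> K \<Longrightarrow> - x \<in> K"
  using subfield by (auto simp: subfield_C_def)

lemma field_inverse: "x \<in> K \<Longrightarrow> inverse x \<in> K"
  using subfield field_zero by (cases "x = 0") (auto simp: subfield_C_def)

lemma field_divide: "x \<in> K \<Longrightarrow> y \<in> K \<Longrightarrow> x / y \<in> K"
  by (simp add: divide_inverse field_inverse field_mult)

lemma field_of_int: "of_int z \<in> K"
proof -
  have "of_nat m \<in> K" for m
    by (induction m) (simp_all add: field_zero field_one field_add)
  moreover have "(of_int z :: complex) = of_nat (nat z) + - of_nat (nat (- z))"
    by (cases "z \<ge> 0") auto
  ultimately show ?thesis by (metis field_add field_uminus)
qed

lemma field_of_rat: "of_rat r \<in> K"
proof -
  obtain p q where "r = Rat.Fract p q" "q > 0" by (cases r) auto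
  then have "(of_rat r :: complex) = of_int p / of_int q" by (simp add: of_rat_rat)
  then show ?thesis by (simp add: field_divide field_of_int)
qed

lemma field_sum: "finite I \<Longrightarrow> (\<And>j. j \<in> I \<Longrightarrow> f j \<in> K) \<Longrightarrow> sum f I \<in> K"
  by (induction I rule: finite_induct) (simp_all add: field_zero field_add)

lemma basis_comb_in_field: "(\<Sum>j<n. of_rat (q j) * b j) \<in> K"
  by (intro field_sum field_mult field_of_rat basis_in_field) auto

lemma degree_pos: "0 < n"
  using basis_spans[OF field_one] by (cases n) auto

lemma basis_comb_inject:
  assumes "(\<Sum>j<n. of_rat (q j) * b j) = (\<Sum>j<n. of_rat (p j) * b j)" "i < n"
  shows "q i = p i"
proof -
  have "(\<Sum>j<n. of_rat (q j - p j) * b j) = 0"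
    using assms(1) by (simp add: of_rat_diff left_diff_distrib sum_subtractf)
  then show ?thesis using basis_independent[OF _ assms(2)] by fastforce
qed

text \<open>Coordinates are forced to vanish from index \<open>n\<close> on, which makes the description unique.\<close>

definition coord :: "complex \<Rightarrow> nat \<Rightarrow> rat"
  where "coord x = (THE q. (\<forall>i\<ge>n. q i = 0) \<and> x = (\<Sum>j<n. of_rat (q j) * b j))"

lemma coord:
  assumes "x \<in> K"
  shows coord_expansion: "x = (\<Sum>j<n. of_rat (coord x j) * b j)"
    and coord_eq_0: "n \<le> i \<Longrightarrow> coord x i = 0"
proof -
  obtain q where q: "x = (\<Sum>j<n. of_rat (q j) * b j)" using basis_spans[OF assms] by blast
  let ?q = "\<lambda>i. if i < n then q i else 0"
  have "(\<Sum>j<n. of_rat (?q j) * b j) = (\<Sum>j<n. of_rat (q j) * b j)" by simp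
  then have ex: "(\<forall>i\<ge>n. ?q i = 0) \<and> x = (\<Sum>j<n. of_rat (?q j) * b j)" using q by simp
  have uniq: "p = ?q" if p: "\<forall>i\<ge>n. p i = 0" "x = (\<Sum>j<n. of_rat (p j) * b j)" for p
  proof
    fix i
    have "(\<Sum>j<n. of_rat (p j) * b j) = (\<Sum>j<n. of_rat (q j) * b j)"
      using p(2) q by (rule trans[OF sym])
    then show "p i = ?q i"
      using p(1) basis_comb_inject[of p q i] by (cases "i < n") simp_all
  qed
  have "\<exists>!q. (\<forall>i\<ge>n. q i = 0) \<and> x = (\<Sum>j<n. of_rat (q j) * b j)"
    by (rule ex1I[of _ ?q]) (use ex uniq in blast)+
  from theI'[OF this] show "x = (\<Sum>j<n. of_rat (coord x j) * b j)" "n \<le> i \<Longrightarrow> coord x i = 0"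
    unfolding coord_def by auto
qed

lemma coord_unique:
  assumes "(\<Sum>j<n. of_rat (q j) * b j) = x" "i < n"
  shows "coord x i = q i"
proof -
  have "x \<in> K" using assms(1) basis_comb_in_field by blast
  then have "(\<Sum>j<n. of_rat (coord x j) * b j) = (\<Sum>j<n. of_rat (q j) * b j)"
    using assms(1) coord_expansion by metis
  then show ?thesis using basis_comb_inject assms(2) by blast
qed

lemma coord_add: "x \<in> K \<Longrightarrow> y \<in> K \<Longrightarrow> coord (x + y) i = coord x i + coord y i"
proof (cases "i < n")
  case True
  assume "x \<in> K" "y \<in> K"
  then have "(\<Sum>j<n. of_rat (coord x j + coord y j) * b j) = x + y"
    by (simp add: of_rat_add distrib_right sum.distrib coord_expansion[symmetric])
  from coord_unique[OF this True] show ?thesis .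
qed (simp add: coord_eq_0 field_add)

lemma coord_of_rat_mult: "x \<in> K \<Longrightarrow> coord (of_rat r * x) i = r * coord x i"
proof (cases "i < n")
  case True
  assume "x \<in> K"
  then have "(\<Sum>j<n. of_rat (r * coord x j) * b j) = of_rat r * x"
    by (simp add: sum_distrib_left[symmetric] of_rat_mult mult.assoc coord_expansion[symmetric])
  from coord_unique[OF this True] show ?thesis .
qed (simp add: coord_eq_0 field_mult field_of_rat)

lemma coord_sum:
  "finite I \<Longrightarrow> (\<And>j. j \<in> I \<Longrightarrow> x j \<in> K) \<Longrightarrow>
    coord (\<Sum>j\<in>I. of_rat (r j) * x j) i = (\<Sum>j\<in>I. r j * coord (x j) i)"
proof (induction I rule: finite_induct)
  case empty
  then show ?case using coord_of_rat_mult[OF field_zero, of 0] by simp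
next
  case (insert a I)
  then show ?case
    by (simp add: coord_add coord_of_rat_mult field_sum field_mult field_of_rat)
qed

lemma coord_basis: "j < n \<Longrightarrow> coord (b j) i = (if i = j then 1 else 0)"
proof (cases "i < n")
  case True
  assume "j < n"
  then have "(\<Sum>m<n. of_rat (if m = j then 1 else 0) * b m) = b j"
    by (simp add: if_distrib[of "\<lambda>r. of_rat r * _"] cong: if_cong)
  from coord_unique[OF this True] show ?thesis .
qed (simp add: coord_eq_0 basis_in_field)

lemma coord_mult:
  assumes "g \<in> K" "a \<in> K"
  shows "coord (g * a) k = (\<Sum>j<n. coord (g * b j) k * coord a j)"
proof -
  have "coord (g * a) k = coord (\<Sum>j<n. of_rat (coord a j) * (g * b j)) k"
    by (subst coord_expansion[OF assms(2)]) (simp add: sum_distrib_left ac_simps)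
  also have "\<dots> = (\<Sum>j<n. coord a j * coord (g * b j) k)"
    using assms coord_sum[of "{..<n}" "\<lambda>j. g * b j" "coord a" k]
    by (simp add: field_mult basis_in_field)
  finally show ?thesis by (simp add: ac_simps)
qed

context
  fixes \<sigma> assumes \<sigma>: "\<sigma> \<in> embeddings K"
begin

lemma embedding_add: "x \<in> K \<Longrightarrow> y \<in> K \<Longrightarrow> \<sigma> (x + y) = \<sigma> x + \<sigma> y"
  and embedding_mult: "x \<in> K \<Longrightarrow> y \<in> K \<Longrightarrow> \<sigma> (x * y) = \<sigma> x * \<sigma> y"
  and embedding_one: "\<sigma> 1 = 1"
  using \<sigma> by (auto simp: embeddings_def)

lemma embedding_zero: "\<sigma> 0 = 0"
  using embedding_add[OF field_zero field_zero] by simp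

lemma embedding_of_int: "\<sigma> (of_int z) = of_int z"
proof -
  have nat: "\<sigma> (of_nat m) = of_nat m" for m
  proof (induction m)
    case (Suc m)
    have "of_nat m \<in> K" using field_of_int[of "int m"] by simp
    then show ?case using embedding_add[OF field_one, of "of_nat m"] embedding_one Suc by simp
  qed (simp add: embedding_zero)
  have "\<sigma> (of_nat m) + \<sigma> (- of_nat m) = 0" for m
    using embedding_add[OF field_of_int[of "int m"] field_of_int[of "- int m"]]
    by (simp add: embedding_zero)
  then have neg: "\<sigma> (- of_nat m) = - of_nat m" for m by (simp add: nat add_eq_0_iff)
  have "of_int z = (of_nat (nat z) :: complex) \<or> of_int z = - (of_nat (nat (- z)) :: complex)"
    by (cases "z \<ge> 0") auto
  then show ?thesis by (metis nat neg)
qed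

lemma embedding_of_rat: "\<sigma> (of_rat r) = of_rat r"
proof -
  obtain p q where r: "r = Rat.Fract p q" "q > 0" by (cases r) auto
  then have "(of_rat r :: complex) * of_int q = of_int p" by (simp add: of_rat_rat)
  then have "\<sigma> (of_rat r) * of_int q = of_int p"
    using embedding_mult[OF field_of_rat field_of_int, of r q] by (simp add: embedding_of_int)
  then show ?thesis using r by (simp add: of_rat_rat field_simps)
qed

lemma embedding_sum: "finite I \<Longrightarrow> (\<And>j. j \<in> I \<Longrightarrow> f j \<in> K) \<Longrightarrow> \<sigma> (sum f I) = (\<Sum>j\<in>I. \<sigma> (f j))"
  by (induction I rule: finite_induct) (simp_all add: embedding_zero embedding_add field_sum)

lemma embedding_coord_expansion:
  assumes "a \<in> K"
  shows "\<sigma> a = (\<Sum>j<n. \<sigma> (b j) * of_rat (coord a j))"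
proof -
  have "\<sigma> a = \<sigma> (\<Sum>j<n. of_rat (coord a j) * b j)"
    using coord_expansion[OF assms] by (rule arg_cong)
  also have "\<dots> = (\<Sum>j<n. \<sigma> (b j) * of_rat (coord a j))"
    by (subst embedding_sum)
       (auto intro!: sum.cong simp: embedding_mult embedding_of_rat field_mult field_of_rat
         basis_in_field mult.commute)
  finally show ?thesis .
qed

end

section \<open>The complexification \<open>K \<otimes>\<^sub>\<rat> \<complex>\<close>\<close>

text \<open>A vector \<open>x :: nat \<Rightarrow> complex\<close> (entries below \<open>n\<close>) stands for \<open>\<Sum>\<^sub>j b\<^sub>j \<otimes> x\<^sub>j\<close>;
  \<open>mult_matrix g\<close> is the matrix of multiplication by \<open>g\<close> and \<open>ext_embedding \<sigma>\<close> the
  \<open>\<complex>\<close>-linear extension of \<open>\<sigma>\<close>.\<close>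

definition mult_matrix :: "complex \<Rightarrow> nat \<Rightarrow> nat \<Rightarrow> complex"
  where "mult_matrix g k j = of_rat (coord (g * b j) k)"

lemma matvec_mult_matrix_mult:
  assumes "g \<in> K" "d \<in> K"
  shows "matvec n (mult_matrix (g * d)) x = matvec n (mult_matrix g) (matvec n (mult_matrix d) x)"
proof
  fix k
  have "coord (g * d * b j) k = (\<Sum>m<n. coord (g * b m) k * coord (d * b j) m)" if "j < n" for j
    using coord_mult[of g "d * b j" k] assms that by (simp add: field_mult basis_in_field ac_simps)
  then have "matvec n (mult_matrix (g * d)) x k =
      (\<Sum>j<n. \<Sum>m<n. mult_matrix g k m * (mult_matrix d m j * x j))"
    unfolding matvec_def mult_matrix_def
    by (intro sum.cong) (simp_all add: of_rat_sum of_rat_mult sum_distrib_right mult.assoc)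
  also have "\<dots> = matvec n (mult_matrix g) (matvec n (mult_matrix d) x) k"
    by (subst sum.swap) (simp add: matvec_def sum_distrib_left)
  finally show "matvec n (mult_matrix (g * d)) x k =
      matvec n (mult_matrix g) (matvec n (mult_matrix d) x) k" .
qed

lemma matvec_mult_matrix_one:
  assumes "k < n"
  shows "matvec n (mult_matrix 1) x k = x k"
proof -
  have "matvec n (mult_matrix 1) x k = (\<Sum>j<n. if j = k then x j else 0)"
    unfolding matvec_def mult_matrix_def by (rule sum.cong) (simp_all add: coord_basis)
  then show ?thesis using assms by simp
qed

lemma matvec_mult_matrix_expand:
  assumes "g \<in> K"
  shows "matvec n (mult_matrix g) x k = (\<Sum>i<n. of_rat (coord g i) * matvec n (mult_matrix (b i)) x k)"
proof -
  have "coord (g * b j) k = (\<Sum>i<n. coord g i * coord (b i * b j) k)" if "j < n" for j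
  proof -
    have "g * b j = (\<Sum>i<n. of_rat (coord g i) * (b i * b j))"
      by (subst coord_expansion[OF assms]) (simp add: sum_distrib_right mult.assoc)
    then show ?thesis
      using coord_sum[of "{..<n}" "\<lambda>i. b i * b j" "coord g" k] that
      by (simp add: field_mult basis_in_field)
  qed
  then have "matvec n (mult_matrix g) x k =
      (\<Sum>j<n. \<Sum>i<n. of_rat (coord g i) * (mult_matrix (b i) k j * x j))"
    unfolding matvec_def mult_matrix_def
    by (intro sum.cong) (simp_all add: of_rat_sum of_rat_mult sum_distrib_right mult.assoc)
  also have "\<dots> = (\<Sum>i<n. of_rat (coord g i) * matvec n (mult_matrix (b i)) x k)"
    by (subst sum.swap) (simp add: matvec_def sum_distrib_left)
  finally show ?thesis .
qed

definition ext_embedding :: "(complex \<Rightarrow> complex) \<Rightarrow> (nat \<Rightarrow> complex) \<Rightarrow> complex"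
  where "ext_embedding \<sigma> x = (\<Sum>j<n. \<sigma> (b j) * x j)"

lemma ext_embedding_lincomb:
  "ext_embedding \<sigma> (\<lambda>k. x k + c * y k) = ext_embedding \<sigma> x + c * ext_embedding \<sigma> y"
  by (simp add: ext_embedding_def distrib_left sum.distrib sum_distrib_left ac_simps)

lemma ext_embedding_mult_matrix:
  assumes "\<sigma> \<in> embeddings K" "g \<in> K"
  shows "ext_embedding \<sigma> (matvec n (mult_matrix g) x) = \<sigma> g * ext_embedding \<sigma> x"
proof -
  have "ext_embedding \<sigma> (matvec n (mult_matrix g) x) =
      (\<Sum>j<n. (\<Sum>k<n. \<sigma> (b k) * of_rat (coord (g * b j) k)) * x j)"
    unfolding ext_embedding_def matvec_def mult_matrix_def sum_distrib_left sum_distrib_right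
    by (subst sum.swap) (simp add: ac_simps)
  also have "\<dots> = (\<Sum>j<n. \<sigma> g * (\<sigma> (b j) * x j))"
    using assms
    by (intro sum.cong) (simp_all add: embedding_coord_expansion[symmetric] embedding_mult
        field_mult basis_in_field)
  finally show ?thesis by (simp add: ext_embedding_def sum_distrib_left)
qed

definition rat_functional :: "(complex \<Rightarrow> rat) \<Rightarrow> bool"
  where "rat_functional f \<longleftrightarrow>
    (\<forall>x\<in>K. \<forall>y\<in>K. f (x + y) = f x + f y) \<and> (\<forall>r. \<forall>x\<in>K. f (of_rat r * x) = r * f x)"

lemma rat_functional_sum:
  assumes f: "rat_functional f" and "finite I" "\<And>i. i \<in> I \<Longrightarrow> a i \<in> K"
  shows "f (\<Sum>i\<in>I. of_rat (r i) * a i) = (\<Sum>i\<in>I. r i * f (a i))"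
  using assms(2,3)
proof (induction I rule: finite_induct)
  case empty
  have "f (of_rat 0 * 0) = 0 * f 0" using f field_zero unfolding rat_functional_def by blast
  then show ?case by simp
next
  case (insert i I)
  then show ?case
    using f by (simp add: rat_functional_def field_sum field_mult field_of_rat)
qed

lemma rat_functional_coord_comb: "rat_functional (\<lambda>x. \<Sum>k<n. z k * coord x k)"
  by (simp add: rat_functional_def coord_add coord_of_rat_mult distrib_left sum.distrib
      sum_distrib_left mult.left_commute)

definition trace :: "complex \<Rightarrow> rat"
  where "trace x = (\<Sum>k<n. coord (x * b k) k)"

lemma rat_functional_trace: "rat_functional trace"
proof -
  have "trace (x + y) = trace x + trace y" if "x \<in> K" "y \<in> K" for x y
    unfolding trace_def sum.distrib[symmetric] using that
    by (intro sum.cong) (simp_all add: distrib_right coord_add field_mult basis_in_field)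
  moreover have "trace (of_rat r * x) = r * trace x" if "x \<in> K" for r x
    unfolding trace_def sum_distrib_left using that
    by (intro sum.cong) (simp_all add: mult.assoc coord_of_rat_mult field_mult basis_in_field)
  ultimately show ?thesis unfolding rat_functional_def by blast
qed

lemma trace_one: "trace 1 = of_nat n"
  by (simp add: trace_def coord_basis)

text \<open>A nonzero functional \<open>f\<close> on the field \<open>K\<close> makes \<open>(x, y) \<mapsto> f (x y)\<close> nondegenerate:
  if \<open>f (x \<omega>) = 0\<close> for all \<open>x\<close> and \<open>\<omega> \<noteq> 0\<close>, take \<open>x = a / \<omega>\<close>.\<close>

lemma rat_functional_form_nondegenerate:
  assumes f: "rat_functional f" and a: "a \<in> K" "f a \<noteq> 0"
    and u: "\<forall>i<n. matvec n (\<lambda>i j. of_rat (f (b i * b j))) u i = 0"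
  shows "\<forall>j<n. u j = 0"
proof (rule matvec_of_rat_kernel_trivial[OF _ u])
  fix q assume q: "\<forall>i<n. matvec n (\<lambda>i j. f (b i * b j)) q i = 0"
  define \<omega> where "\<omega> = (\<Sum>j<n. of_rat (q j) * b j)"
  have \<omega>: "\<omega> \<in> K" unfolding \<omega>_def by (rule basis_comb_in_field)
  have basis_times_\<omega>: "f (b i * \<omega>) = 0" if "i < n" for i
  proof -
    have "f (b i * \<omega>) = (\<Sum>j<n. q j * f (b i * b j))"
      unfolding \<omega>_def sum_distrib_left
      using rat_functional_sum[OF f, of "{..<n}" "\<lambda>j. b i * b j" q] that
      by (simp add: ac_simps field_mult basis_in_field)
    then show ?thesis using q that by (simp add: matvec_def mult.commute[of "q _"])
  qed
  have times_\<omega>: "f (x * \<omega>) = 0" if "x \<in> K" for x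
  proof -
    have "x * \<omega> = (\<Sum>i<n. of_rat (coord x i) * b i) * \<omega>"
      using coord_expansion[OF that] by (rule arg_cong)
    also have "\<dots> = (\<Sum>i<n. of_rat (coord x i) * (b i * \<omega>))"
      by (simp add: sum_distrib_right mult.assoc)
    finally show ?thesis
      using rat_functional_sum[OF f, of "{..<n}" "\<lambda>i. b i * \<omega>" "coord x"] \<omega> basis_times_\<omega>
      by (simp add: field_mult basis_in_field)
  qed
  have "\<omega> = 0"
  proof (rule ccontr)
    assume "\<omega> \<noteq> 0"
    then have "f (a / \<omega> * \<omega>) = f a" by simp
    then show False using times_\<omega>[OF field_divide[OF a(1) \<omega>]] a(2) by simp
  qed
  then show "\<forall>j<n. q j = 0" using basis_independent unfolding \<omega>_def by blast
qed

definition in_eigenspace :: "(complex \<Rightarrow> complex) \<Rightarrow> (nat \<Rightarrow> complex) \<Rightarrow> bool"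
  where "in_eigenspace \<sigma> y \<longleftrightarrow> (\<forall>g\<in>K. \<forall>k<n. matvec n (mult_matrix g) y k = \<sigma> g * y k)"

lemma common_eigenvector_in_eigenspace:
  assumes y: "\<exists>k<n. y k \<noteq> 0"
    and eig: "\<And>i. i < n \<Longrightarrow> \<exists>\<mu>. \<forall>k<n. matvec n (mult_matrix (b i)) y k = \<mu> * y k"
  obtains \<sigma> where "\<sigma> \<in> embeddings K" "in_eigenspace \<sigma> y"
proof -
  obtain \<mu> where \<mu>: "\<And>i k. i < n \<Longrightarrow> k < n \<Longrightarrow> matvec n (mult_matrix (b i)) y k = \<mu> i * y k"
    using eig by metis
  obtain k0 where k0: "k0 < n" "y k0 \<noteq> 0" using y by blast
  define \<chi> where "\<chi> g = (\<Sum>i<n. of_rat (coord g i) * \<mu> i)" for g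
  have eigen: "matvec n (mult_matrix g) y k = \<chi> g * y k" if "g \<in> K" "k < n" for g k
    unfolding matvec_mult_matrix_expand[OF that(1)] \<chi>_def sum_distrib_right
    by (rule sum.cong) (simp_all add: \<mu> that(2) mult.assoc)
  have "\<chi> 1 = 1"
    using eigen[OF field_one k0(1)] matvec_mult_matrix_one[OF k0(1)] k0(2) by simp
  moreover have "\<chi> (g + d) = \<chi> g + \<chi> d" if "g \<in> K" "d \<in> K" for g d
    using that by (simp add: \<chi>_def coord_add of_rat_add distrib_right sum.distrib)
  moreover have "\<chi> (g * d) = \<chi> g * \<chi> d" if "g \<in> K" "d \<in> K" for g d
  proof -
    have "\<chi> (g * d) * y k0 = matvec n (mult_matrix g) (matvec n (mult_matrix d) y) k0"
      using eigen[OF field_mult[OF that] k0(1)] matvec_mult_matrix_mult[OF that] by simp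
    also have "matvec n (mult_matrix g) (matvec n (mult_matrix d) y) =
        matvec n (mult_matrix g) (\<lambda>k. \<chi> d * y k)"
      by (rule matvec_cong) (simp add: eigen that(2))
    also have "\<dots> k0 = \<chi> g * \<chi> d * y k0"
      using eigen[OF that(1) k0(1)] by (simp add: matvec_scale)
    finally show ?thesis using k0(2) by simp
  qed
  ultimately have "(\<lambda>x. if x \<in> K then \<chi> x else 0) \<in> embeddings K"
    by (simp add: embeddings_def field_one field_add field_mult)
  moreover have "in_eigenspace (\<lambda>x. if x \<in> K then \<chi> x else 0) y"
    using eigen by (simp add: in_eigenspace_def)
  ultimately show ?thesis using that by blast
qed

lemma ext_embedding_eigenvector_nonzero:
  assumes \<sigma>: "\<sigma> \<in> embeddings K" and y: "in_eigenspace \<sigma> y" "\<exists>k<n. y k \<noteq> 0"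
  shows "ext_embedding \<sigma> y \<noteq> 0"
proof
  assume "ext_embedding \<sigma> y = 0"
  have "matvec n (\<lambda>i j. of_rat (trace (b i * b j))) y i = 0" if i: "i < n" for i
  proof -
    have "matvec n (\<lambda>i j. of_rat (trace (b i * b j))) y i =
        (\<Sum>k<n. matvec n (mult_matrix (b i * b k)) y k)"
      unfolding matvec_def trace_def mult_matrix_def of_rat_sum sum_distrib_right
      by (subst sum.swap) (simp add: ac_simps)
    also have "\<dots> = (\<Sum>k<n. \<sigma> (b i) * (\<sigma> (b k) * y k))"
      using y(1) i by (intro sum.cong) (simp_all add: in_eigenspace_def embedding_mult[OF \<sigma>]
          field_mult basis_in_field)
    also have "\<dots> = \<sigma> (b i) * ext_embedding \<sigma> y"
      by (simp add: ext_embedding_def sum_distrib_left)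
    finally show ?thesis using \<open>ext_embedding \<sigma> y = 0\<close> by simp
  qed
  then have "\<forall>j<n. y j = 0"
    using rat_functional_form_nondegenerate[OF rat_functional_trace field_one, of y] degree_pos
    by (simp add: trace_one)
  then show False using y(2) by blast
qed

lemma ext_embeddings_separate:
  assumes "\<forall>\<sigma>\<in>embeddings K. ext_embedding \<sigma> x = 0"
  shows "\<forall>j<n. x j = 0"
proof (rule ccontr)
  assume "\<not> (\<forall>j<n. x j = 0)"
  then have x: "\<exists>k<n. x k \<noteq> 0" by auto
  define S where "S = {y. \<forall>\<sigma>\<in>embeddings K. ext_embedding \<sigma> y = 0}"
  define \<A> where "\<A> = (\<lambda>i. mult_matrix (b i)) ` {..<n}"
  have "vec_subspace S" by (simp add: vec_subspace_def S_def ext_embedding_lincomb)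
  moreover have "\<forall>A\<in>\<A>. \<forall>y\<in>S. matvec n A y \<in> S"
    by (auto simp: \<A>_def S_def ext_embedding_mult_matrix basis_in_field)
  moreover have "\<forall>A\<in>\<A>. \<forall>B\<in>\<A>. \<forall>y. matvec n A (matvec n B y) = matvec n B (matvec n A y)"
    by (auto simp: \<A>_def matvec_mult_matrix_mult[symmetric] basis_in_field mult.commute)
  moreover have "x \<in> S" using assms by (simp add: S_def)
  ultimately obtain y where y: "y \<in> S" "\<exists>k<n. y k \<noteq> 0"
      "\<forall>A\<in>\<A>. \<exists>\<mu>. \<forall>k<n. matvec n A y k = \<mu> * y k"
    using common_eigenvector[of \<A> S n x] x by (auto simp: \<A>_def)
  then obtain \<sigma> where "\<sigma> \<in> embeddings K" "in_eigenspace \<sigma> y"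
    using common_eigenvector_in_eigenspace[of y] by (auto simp: \<A>_def)
  then show False using ext_embedding_eigenvector_nonzero y by (auto simp: S_def)
qed

lemma in_eigenspace_if_ext_embedding_indicator:
  assumes "\<forall>\<sigma>\<in>embeddings K. ext_embedding \<sigma> y = (if \<sigma> = \<tau> then 1 else 0)"
  shows "in_eigenspace \<tau> y"
  unfolding in_eigenspace_def
proof (intro ballI allI impI)
  fix g k assume g: "g \<in> K" and k: "k < n"
  let ?u = "\<lambda>k. matvec n (mult_matrix g) y k + (- \<tau> g) * y k"
  have "\<forall>\<sigma>\<in>embeddings K. ext_embedding \<sigma> ?u = 0"
    unfolding ext_embedding_lincomb using assms by (simp add: ext_embedding_mult_matrix g)
  then have "?u k = 0" using ext_embeddings_separate k by blast
  then show "matvec n (mult_matrix g) y k = \<tau> g * y k" by simp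
qed

lemma eigenvector_not_in_rational_hyperplane:
  assumes y: "in_eigenspace \<tau> y" "\<exists>k<n. y k \<noteq> 0" and z: "\<exists>k<n. z k \<noteq> 0"
  shows "(\<Sum>k<n. of_rat (z k) * y k) \<noteq> 0"
proof
  assume zy: "(\<Sum>k<n. of_rat (z k) * y k) = 0"
  let ?f = "\<lambda>x. \<Sum>k<n. z k * coord x k"
  obtain k0 where k0: "k0 < n" "z k0 \<noteq> 0" using z by blast
  have "?f (b k0) = (\<Sum>k<n. if k = k0 then z k else 0)"
    by (rule sum.cong) (simp_all add: coord_basis k0(1))
  then have f_k0: "?f (b k0) \<noteq> 0" using k0 by simp
  have "matvec n (\<lambda>i j. of_rat (?f (b i * b j))) y m = 0" if m: "m < n" for m
  proof -
    have "matvec n (\<lambda>i j. of_rat (?f (b i * b j))) y m =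
        (\<Sum>k<n. of_rat (z k) * matvec n (mult_matrix (b m)) y k)"
      unfolding matvec_def mult_matrix_def of_rat_sum of_rat_mult sum_distrib_left
        sum_distrib_right
      by (subst sum.swap) (simp add: ac_simps)
    also have "\<dots> = \<tau> (b m) * (\<Sum>k<n. of_rat (z k) * y k)"
      unfolding sum_distrib_left using y(1) m
      by (intro sum.cong) (simp_all add: in_eigenspace_def basis_in_field)
    finally show ?thesis using zy by simp
  qed
  then have "\<forall>j<n. y j = 0"
    using rat_functional_form_nondegenerate[OF rat_functional_coord_comb basis_in_field[OF k0(1)]
        f_k0] by blast
  then show False using y(2) by blast
qed

lemma embedding_indicator_not_small_real_comb:
  assumes "\<tau> \<in> embeddings K" "finite I" "card I < n" "\<forall>i\<in>I. v i \<in> K"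
  shows "\<not> (\<forall>\<sigma>\<in>embeddings K. (\<Sum>i\<in>I. of_real (c i) * \<sigma> (v i)) = (if \<sigma> = \<tau> then 1 else 0))"
proof
  assume indicator:
    "\<forall>\<sigma>\<in>embeddings K. (\<Sum>i\<in>I. of_real (c i) * \<sigma> (v i)) = (if \<sigma> = \<tau> then 1 else 0)"
  define y :: "nat \<Rightarrow> complex"
    where "y k = (\<Sum>i\<in>I. of_real (c i) * of_rat (coord (v i) k))" for k
  have "ext_embedding \<sigma> y = (\<Sum>i\<in>I. of_real (c i) * \<sigma> (v i))" if \<sigma>: "\<sigma> \<in> embeddings K" for \<sigma>
    unfolding ext_embedding_def y_def sum_distrib_left
    by (subst sum.swap) (simp add: embedding_coord_expansion[OF \<sigma>] assms(4) sum_distrib_left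
        ac_simps)
  with indicator have ext_y: "\<forall>\<sigma>\<in>embeddings K. ext_embedding \<sigma> y = (if \<sigma> = \<tau> then 1 else 0)"
    by simp
  have y_nonzero: "\<exists>k<n. y k \<noteq> 0"
  proof (rule ccontr)
    assume "\<not> (\<exists>k<n. y k \<noteq> 0)"
    then have "ext_embedding \<tau> y = 0" by (simp add: ext_embedding_def)
    then show False using ext_y assms(1) by simp
  qed
  have y_eigen: "in_eigenspace \<tau> y"
    using ext_y by (rule in_eigenspace_if_ext_embedding_indicator)
  obtain z :: "nat \<Rightarrow> rat"
    where z: "\<exists>j<n. z j \<noteq> 0" "\<forall>i\<in>I. (\<Sum>j<n. coord (v i) j * z j) = 0"
    by (rule finite_underdetermined_system_nontrivial_solution[OF assms(2,3)])
  have "(\<Sum>k<n. of_rat (z k) * y k) =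
      (\<Sum>i\<in>I. of_real (c i) * of_rat (\<Sum>j<n. coord (v i) j * z j))"
    unfolding y_def sum_distrib_left of_rat_sum of_rat_mult
    by (subst sum.swap) (simp add: ac_simps)
  also have "\<dots> = 0" using z(2) by simp
  finally show False
    using eigenvector_not_in_rational_hyperplane[OF y_eigen y_nonzero z(1)] by blast
qed

end

lemma number_field_basis_exists:
  assumes "number_field K n"
  obtains b where "number_field_basis K n b"
proof -
  obtain B where sub: "subfield_C K" and B: "rat_basis K B" "card B = n"
    using assms unfolding number_field_def by blast
  have fin: "finite B" and BK: "B \<subseteq> K"
    and indep: "\<And>c. \<forall>b\<in>B. c b \<in> \<rat> \<Longrightarrow> (\<Sum>b\<in>B. c b * b) = 0 \<Longrightarrow> \<forall>b\<in>B. c b = 0"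
    and spans: "\<And>x. x \<in> K \<Longrightarrow> \<exists>c. (\<forall>b\<in>B. c b \<in> \<rat>) \<and> x = (\<Sum>b\<in>B. c b * b)"
    using B(1) unfolding rat_basis_def by blast+
  obtain h where "bij_betw h {..<n} B"
    using ex_bij_betw_nat_finite[OF fin] B(2) by (auto simp: atLeast0LessThan)
  then have h: "inj_on h {..<n}" "h ` {..<n} = B" by (auto simp: bij_betw_def)
  have reindex: "(\<Sum>b\<in>B. g b) = (\<Sum>j<n. g (h j))" for g :: "complex \<Rightarrow> complex"
    using sum.reindex[OF h(1), of g] h(2) by simp
  have "number_field_basis K n h"
  proof
    show "subfield_C K" by (rule sub)
    show "h i \<in> K" if "i < n" for i using that h(2) BK by auto
  next
    fix q :: "nat \<Rightarrow> rat" and i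
    assume q: "(\<Sum>j<n. of_rat (q j) * h j) = 0" and i: "i < n"
    define c where "c b = (of_rat (q (the_inv_into {..<n} h b)) :: complex)" for b
    have c_h: "c (h j) = of_rat (q j)" if "j < n" for j
      using the_inv_into_f_f[OF h(1)] that by (simp add: c_def)
    have "(\<Sum>b\<in>B. c b * b) = 0"
      using q by (simp add: reindex c_h)
    moreover have "\<forall>b\<in>B. c b \<in> \<rat>" by (simp add: c_def)
    ultimately have "c (h i) = 0" using indep h(2) i by blast
    then show "q i = 0" using c_h[OF i] by simp
  next
    fix x assume "x \<in> K"
    then obtain c where c: "\<forall>b\<in>B. c b \<in> \<rat>" "x = (\<Sum>b\<in>B. c b * b)" using spans by blast
    have "\<forall>j. \<exists>r. j < n \<longrightarrow> c (h j) = of_rat r"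
      using c(1) h(2) by (metis Rats_cases image_eqI lessThan_iff)
    then obtain q where q: "\<And>j. j < n \<Longrightarrow> c (h j) = of_rat (q j)" by metis
    have "x = (\<Sum>j<n. of_rat (q j) * h j)" by (simp add: c(2) reindex q)
    then show "\<exists>q. x = (\<Sum>j<n. of_rat (q j) * h j)" by blast
  qed
  then show ?thesis by (rule that)
qed

section \<open>Standard embeddings\<close>

lemma standard_embeddings_cases:
  assumes "standard_embeddings K r1 r2 \<tau>" "1 \<le> r1" "\<sigma> \<in> embeddings K"
  obtains "\<sigma> = \<tau> 1" | j where "j \<in> {2..r1 + r2}" "\<sigma> = \<tau> j \<or> \<sigma> = cnj \<circ> \<tau> j"
proof (cases "\<sigma> \<in> real_embeddings K")
  case True
  then have "\<sigma> \<in> \<tau> ` {1..r1}"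
    using assms(1) by (simp add: standard_embeddings_def bij_betw_def)
  then obtain j where "j \<in> {1..r1}" "\<sigma> = \<tau> j" by blast
  then show ?thesis using that(1) that(2)[of j] by (cases "j = 1") auto
next
  case False
  then have "\<sigma> \<in> complex_embeddings K" using assms(3) by (simp add: complex_embeddings_def)
  then obtain j where "j \<in> {r1 + 1..r1 + r2}" "\<sigma> = \<tau> j \<or> \<sigma> = cnj \<circ> \<tau> j"
    using assms(1) unfolding standard_embeddings_def by blast
  then show ?thesis using that(2)[of j] assms(2) by auto
qed

lemma standard_embeddings_e1_combination:
  assumes "standard_embeddings K r1 r2 \<tau>" "1 \<le> r1" "\<sigma> \<in> embeddings K"
    and e1: "\<forall>j\<in>{1..r1 + r2}. e1 j = (\<Sum>i\<in>I. of_real (c i) * \<tau> j (v i))"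
  shows "(\<Sum>i\<in>I. of_real (c i) * \<sigma> (v i)) = (if \<sigma> = \<tau> 1 then 1 else 0)"
proof (cases "\<sigma> = \<tau> 1")
  case True
  then show ?thesis using e1[rule_format, of 1] assms(2) by (simp add: e1_def)
next
  case False
  then obtain j where j: "j \<in> {2..r1 + r2}" "\<sigma> = \<tau> j \<or> \<sigma> = cnj \<circ> \<tau> j"
    using standard_embeddings_cases[OF assms(1-3)] by metis
  then have "(\<Sum>i\<in>I. of_real (c i) * \<tau> j (v i)) = 0"
    using e1[rule_format, of j] by (simp add: e1_def)
  moreover have "cnj (\<Sum>i\<in>I. of_real (c i) * \<tau> j (v i)) =
      (\<Sum>i\<in>I. of_real (c i) * cnj (\<tau> j (v i)))"
    by simp
  ultimately show ?thesis using j(2) False by auto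
qed

theorem lemma19:
  fixes K :: "complex set" and n r1 r2 l :: nat
    and \<tau> :: "nat \<Rightarrow> complex \<Rightarrow> complex" and v :: "nat \<Rightarrow> complex"
  assumes "number_field K n"
    and "standard_embeddings K r1 r2 \<tau>"
    and "r1 \<ge> 1"
    and "\<forall>i\<in>{1..l}. v i \<in> K"
    and "l < n"
  shows "e1 \<notin> real_span_V (r1 + r2) l (\<lambda>i. embV \<tau> (v i))"
proof
  assume "e1 \<in> real_span_V (r1 + r2) l (\<lambda>i. embV \<tau> (v i))"
  then obtain c :: "nat \<Rightarrow> real"
    where c: "\<forall>j\<in>{1..r1 + r2}. e1 j = (\<Sum>i\<in>{1..l}. of_real (c i) * \<tau> j (v i))"
    by (auto simp: real_span_V_def embV_def)
  then have "\<forall>\<sigma>\<in>embeddings K.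
      (\<Sum>i\<in>{1..l}. of_real (c i) * \<sigma> (v i)) = (if \<sigma> = \<tau> 1 then 1 else 0)"
    using standard_embeddings_e1_combination[OF assms(2,3)] by blast
  moreover have "\<tau> 1 \<in> embeddings K"
    using assms(2,3) by (auto simp: standard_embeddings_def bij_betw_def real_embeddings_def)
  moreover obtain b where "number_field_basis K n b"
    using assms(1) by (rule number_field_basis_exists)
  ultimately show False
    using number_field_basis.embedding_indicator_not_small_real_comb[of K n b "\<tau> 1" "{1..l}" v]
      assms(4,5) by auto
qed

end
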